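(* Let $f:\mathbb{R}^N\to\mathbb{R}$ be continuous and convex with $\|\partial f\|\le G$ for some choice of subgradient, where $G>0$; let $\mathcal{C}\subset\mathbb{R}^N$ be a nonempty compact convex set and $x_{\mathrm{opt}}\in\mathcal{C}$ a minimizer of the restriction of $f$ to $\mathcal{C}$. Then $f$ restricted to $\mathcal{C}$ and $f+2G\psi_{\mathcal{C}}$ (on all of $\mathbb{R}^N$) have the same minimizer; and if for some $x\in\mathbb{R}^N$ $$f(x)+2G\psi_{\mathcal{C}}(x)-f(x_{\mathrm{opt}})\le\varepsilon,$$ then $\|x-\pi_{\mathcal{C}}(x)\|\le\varepsilon/G$.
   Context: For $x\in\partial\mathcal{C}$ let $S(x)$ be the set of unit vectors $v$ with $\sup_{y\in\mathcal{C}}\langle v,y-x\rangle\le 0$, and define the penalization $\psi_{\mathcal{C}}(y)=\sup_{x\in\partial\mathcal{C},\,v\in S(x)\cup\{0\}}\langle v,y-x\rangle$. $\pi_{\mathcal{C}}$ is the Euclidean projection onto $\mathcal{C}$. *)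

theory Defs
  imports "HOL-Analysis.Analysis"
begin

definition normal_dirs :: "'a::euclidean_space set \<Rightarrow> 'a \<Rightarrow> 'a set" where
  "normal_dirs C x = {v. norm v = 1 \<and> (SUP y\<in>C. inner v (y - x)) \<le> 0}"

definition psiC :: "'a::euclidean_space set \<Rightarrow> 'a \<Rightarrow> real" where
  "psiC C y = Sup {inner v (y - x) | x v. x \<in> frontier C \<and> v \<in> normal_dirs C x \<union> {0}}"

end

theory Submission
  imports Defs
begin

text \<open>
  On \<open>C\<close> the penalty \<open>\<psi>\<^sub>C\<close> vanishes, while outside \<open>C\<close> it dominates the distance to \<open>C\<close>:
  the unit vector from \<open>\<pi>\<^sub>C(y)\<close> towards \<open>y\<close> is an outward normal at the boundary point
  \<open>\<pi>\<^sub>C(y)\<close>. A subgradient bound \<open>G\<close> makes \<open>f\<close> \<open>G\<close>-Lipschitz from below, so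
  \<open>f(y) \<ge> f(\<pi>\<^sub>C(y)) - G \<parallel>y - \<pi>\<^sub>C(y)\<parallel> \<ge> f(x\<^sub>o\<^sub>p\<^sub>t) - G \<parallel>y - \<pi>\<^sub>C(y)\<parallel>\<close>, and with
  the penalty \<open>2 G \<psi>\<^sub>C(y) \<ge> 2 G \<parallel>y - \<pi>\<^sub>C(y)\<parallel>\<close> this yields
  \<open>f(y) + 2 G \<psi>\<^sub>C(y) \<ge> f(x\<^sub>o\<^sub>p\<^sub>t) + G \<parallel>y - \<pi>\<^sub>C(y)\<parallel>\<close>. Both claims are read off this inequality.
\<close>

lemma closest_point_in_frontier:
  fixes S :: "'a::euclidean_space set"
  assumes "closed S" "S \<noteq> {}" "x \<notin> S"
  shows "closest_point S x \<in> frontier S"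
proof (cases "interior S = {}")
  case True
  then show ?thesis
    using assms closest_point_in_set by (simp add: frontier_def)
next
  case False
  then have "affine hull S = UNIV"
    by (rule affine_hull_nonempty_interior)
  then have "closest_point S x \<notin> interior S"
    using closest_point_in_rel_interior[OF assms(1,2)] rel_interior_interior assms(3)
      interior_subset by blast
  then show ?thesis
    using assms closest_point_in_set by (simp add: frontier_def)
qed

lemma compact_frontier_nonempty:
  fixes S :: "'a::euclidean_space set"
  assumes "compact S" "S \<noteq> {}"
  shows "frontier S \<noteq> {}"
  using assms frontier_eq_empty not_compact_UNIV by blast

lemma bdd_above_psiC_values:
  fixes C :: "'a::euclidean_space set"
  assumes "compact C"
  shows "bdd_above {inner v (y - x) | x v. x \<in> frontier C \<and> v \<in> normal_dirs C x \<union> {0}}"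
proof -
  obtain B where B: "\<And>x. x \<in> C \<Longrightarrow> norm x \<le> B"
    using compact_imp_bounded[OF assms] unfolding bounded_iff by blast
  show ?thesis
  proof (rule bdd_aboveI[where M = "norm y + B"])
    fix t assume "t \<in> {inner v (y - x) | x v. x \<in> frontier C \<and> v \<in> normal_dirs C x \<union> {0}}"
    then obtain x v where t: "t = inner v (y - x)" and "x \<in> frontier C"
      and v: "v \<in> normal_dirs C x \<union> {0}"
      by blast
    then have x: "x \<in> C"
      using frontier_subset_closed[OF compact_imp_closed[OF assms]] by blast
    from v have "norm v \<le> 1"
      by (cases "v = 0") (simp_all add: normal_dirs_def)
    have "t \<le> norm v * norm (y - x)"
      unfolding t by (rule norm_cauchy_schwarz)
    also have "\<dots> \<le> norm (y - x)"
      using \<open>norm v \<le> 1\<close> by (simp add: mult_left_le_one_le)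
    also have "\<dots> \<le> norm y + B"
      using B[OF x] norm_triangle_ineq4[of y x] by linarith
    finally show "t \<le> norm y + B" .
  qed
qed

lemma psiC_upper:
  fixes C :: "'a::euclidean_space set"
  assumes "compact C" "x \<in> frontier C" "v \<in> normal_dirs C x \<union> {0}"
  shows "inner v (y - x) \<le> psiC C y"
  unfolding psiC_def using assms by (intro cSup_upper bdd_above_psiC_values) auto

lemma psiC_nonneg:
  fixes C :: "'a::euclidean_space set"
  assumes "compact C" "C \<noteq> {}"
  shows "0 \<le> psiC C y"
proof -
  obtain x where "x \<in> frontier C"
    using compact_frontier_nonempty[OF assms] by blast
  then show ?thesis
    using psiC_upper[OF assms(1), of x 0 y] by simp
qed

lemma psiC_ge_dist_closest_point:
  fixes C :: "'a::euclidean_space set"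
  assumes "compact C" "convex C" "C \<noteq> {}"
  shows "norm (y - closest_point C y) \<le> psiC C y"
proof (cases "y \<in> C")
  case True
  then show ?thesis
    using psiC_nonneg[OF assms(1,3)] by (simp add: closest_point_self)
next
  case False
  define p where "p = closest_point C y"
  define v where "v = (1 / norm (y - p)) *\<^sub>R (y - p)"
  have closed: "closed C"
    using assms(1) compact_imp_closed by blast
  have "p \<in> C"
    unfolding p_def using closed assms(3) by (rule closest_point_in_set)
  then have "y \<noteq> p"
    using False by blast
  have "inner v (z - p) \<le> 0" if "z \<in> C" for z
    using closest_point_dot[OF assms(2) closed that, of y]
    by (simp add: v_def p_def divide_nonpos_nonneg)
  then have "(SUP z\<in>C. inner v (z - p)) \<le> 0"
    using assms(3) by (intro cSUP_least) auto
  moreover have "norm v = 1"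
    using \<open>y \<noteq> p\<close> by (simp add: v_def)
  ultimately have "v \<in> normal_dirs C p"
    by (simp add: normal_dirs_def)
  then have "inner v (y - p) \<le> psiC C y"
    using psiC_upper[OF assms(1)] closest_point_in_frontier[OF closed assms(3) False]
    by (simp add: p_def)
  moreover have "inner v (y - p) = norm (y - p)"
    using \<open>y \<noteq> p\<close> by (simp add: v_def dot_square_norm power2_eq_square)
  ultimately show ?thesis
    by (simp add: p_def)
qed

lemma psiC_nonpos:
  fixes C :: "'a::euclidean_space set"
  assumes "compact C" "C \<noteq> {}" "y \<in> C"
  shows "psiC C y \<le> 0"
  unfolding psiC_def
proof (rule cSup_least)
  show "{inner v (y - x) | x v. x \<in> frontier C \<and> v \<in> normal_dirs C x \<union> {0}} \<noteq> {}"
    using compact_frontier_nonempty[OF assms(1,2)] by blast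
next
  fix t assume "t \<in> {inner v (y - x) | x v. x \<in> frontier C \<and> v \<in> normal_dirs C x \<union> {0}}"
  then obtain x v where t: "t = inner v (y - x)" and v: "v \<in> normal_dirs C x \<union> {0}"
    by blast
  show "t \<le> 0"
  proof (cases "v = 0")
    case False
    have "compact ((\<lambda>z. inner v (z - x)) ` C)"
      using assms(1) by (intro compact_continuous_image continuous_intros)
    then have "bdd_above ((\<lambda>z. inner v (z - x)) ` C)"
      by (intro bounded_imp_bdd_above compact_imp_bounded)
    then have "inner v (y - x) \<le> (SUP z\<in>C. inner v (z - x))"
      using assms(3) by (rule cSUP_upper2) simp
    also have "\<dots> \<le> 0"
      using False v by (simp add: normal_dirs_def)
    finally show ?thesis
      using t by simp
  qed (use t in simp)
qed

lemma psiC_eq_0: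
  fixes C :: "'a::euclidean_space set"
  assumes "compact C" "C \<noteq> {}" "y \<in> C"
  shows "psiC C y = 0"
  using psiC_nonneg[OF assms(1,2)] psiC_nonpos[OF assms] by (rule antisym[rotated])

lemma subgradient_lower_bound:
  fixes f :: "'a::real_inner \<Rightarrow> real"
  assumes "\<forall>y. f y \<ge> f x + inner g (y - x)" "norm g \<le> G"
  shows "f x - G * norm (y - x) \<le> f y"
proof -
  have "- inner g (y - x) \<le> norm g * norm (y - x)"
    using norm_cauchy_schwarz[of "- g" "y - x"] by simp
  also have "\<dots> \<le> G * norm (y - x)"
    using assms(2) by (simp add: mult_right_mono)
  finally show ?thesis
    using assms(1)[rule_format, of y] by linarith
qed

lemma psiC_exact_penalty_bound:
  fixes f :: "'a::euclidean_space \<Rightarrow> real"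
  assumes "G \<ge> 0" "\<forall>x. \<exists>g. (\<forall>y. f y \<ge> f x + inner g (y - x)) \<and> norm g \<le> G"
    and "compact C" "convex C" "C \<noteq> {}"
    and "xopt \<in> C" "\<forall>y\<in>C. f xopt \<le> f y"
  shows "f xopt + G * norm (y - closest_point C y) \<le> f y + 2 * G * psiC C y"
proof -
  define p where "p = closest_point C y"
  obtain g where g: "\<forall>z. f z \<ge> f p + inner g (z - p)" "norm g \<le> G"
    using assms(2) by blast
  have "p \<in> C"
    unfolding p_def using assms(3,5) compact_imp_closed closest_point_in_set by blast
  then have "f xopt \<le> f p"
    using assms(7) by blast
  moreover have "f p - G * norm (y - p) \<le> f y"
    by (rule subgradient_lower_bound[OF g])
  moreover have "G * norm (y - p) \<le> G * psiC C y"
    using psiC_ge_dist_closest_point[OF assms(3-5)] assms(1)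
    by (simp add: p_def mult_left_mono)
  ultimately show ?thesis
    unfolding p_def by linarith
qed

lemma argmin_exact_penalty:
  fixes f F :: "'a::euclidean_space \<Rightarrow> real"
  assumes "closed C" "C \<noteq> {}" "G > 0"
    and "xopt \<in> C" "\<forall>y\<in>C. f xopt \<le> f y"
    and F_on_C: "\<And>y. y \<in> C \<Longrightarrow> F y = f y"
    and F_bound: "\<And>y. f xopt + G * norm (y - closest_point C y) \<le> F y"
  shows "F x - f xopt \<le> \<epsilon> \<Longrightarrow> norm (x - closest_point C x) \<le> \<epsilon> / G"
    and "F xopt \<le> F y"
    and "{x \<in> C. \<forall>y\<in>C. f x \<le> f y} = {x. \<forall>y. F x \<le> F y}"
proof -
  have dist_le: "norm (x - closest_point C x) \<le> (F x - f xopt) / G" for x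
    using F_bound[of x] assms(3) by (simp add: pos_le_divide_eq mult.commute)
  then show "F x - f xopt \<le> \<epsilon> \<Longrightarrow> norm (x - closest_point C x) \<le> \<epsilon> / G"
    using assms(3) by (meson divide_right_mono less_imp_le order_trans)
  show F_min: "F xopt \<le> F y" for y
  proof -
    have "0 \<le> G * norm (y - closest_point C y)"
      using assms(3) by simp
    then show ?thesis
      using F_bound[of y] F_on_C[OF assms(4)] by linarith
  qed
  have in_C: "x \<in> C" if "F x \<le> F xopt" for x
  proof -
    have "norm (x - closest_point C x) \<le> 0"
      using dist_le[of x] that F_on_C[OF assms(4)] assms(3)
      by (smt (verit) divide_nonpos_pos)
    then have "closest_point C x = x"
      by simp
    then show ?thesis
      using closest_point_refl[OF assms(1,2)] by blast
  qed
  show "{x \<in> C. \<forall>y\<in>C. f x \<le> f y} = {x. \<forall>y. F x \<le> F y}"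
  proof safe
    fix x y assume "x \<in> C" "\<forall>y\<in>C. f x \<le> f y"
    then show "F x \<le> F y"
      using F_min[of y] F_on_C assms(4) by (metis order_trans)
  next
    fix x assume "\<forall>y. F x \<le> F y"
    then show "x \<in> C"
      using in_C by blast
    then show "f x \<le> f y" if "y \<in> C" for y
      using \<open>\<forall>y. F x \<le> F y\<close> F_on_C that by metis
  qed
qed

theorem lemma3p4:
  fixes f :: "'a::euclidean_space \<Rightarrow> real" and C :: "'a set"
    and G :: real and xopt :: 'a
  assumes "continuous_on UNIV f" and "convex_on UNIV f"
    and "G > 0"
    and "\<exists>g. \<forall>x. (\<forall>y. f y \<ge> f x + inner (g x) (y - x)) \<and> norm (g x) \<le> G"
    and "C \<noteq> {}" and "compact C" and "convex C"
    and "xopt \<in> C" and "\<forall>y\<in>C. f xopt \<le> f y"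
  shows "{x \<in> C. \<forall>y\<in>C. f x \<le> f y}
           = {x. \<forall>y. f x + 2 * G * psiC C x \<le> f y + 2 * G * psiC C y}
       \<and> (\<forall>y. f xopt + 2 * G * psiC C xopt \<le> f y + 2 * G * psiC C y)
       \<and> (\<forall>x \<epsilon>. f x + 2 * G * psiC C x - f xopt \<le> \<epsilon> \<longrightarrow>
                  norm (x - closest_point C x) \<le> \<epsilon> / G)"
proof -
  define F where "F = (\<lambda>y. f y + 2 * G * psiC C y)"
  have "\<forall>x. \<exists>g. (\<forall>y. f y \<ge> f x + inner g (y - x)) \<and> norm g \<le> G"
    using assms(4) by blast
  then have F_bound: "f xopt + G * norm (y - closest_point C y) \<le> F y" for y
    unfolding F_def using assms(3,5-9) by (intro psiC_exact_penalty_bound) auto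
  have F_on_C: "F y = f y" if "y \<in> C" for y
    using psiC_eq_0[OF assms(6,5) that] by (simp add: F_def)
  note argmin_exact_penalty[OF compact_imp_closed[OF assms(6)] assms(5,3,8,9) F_on_C F_bound]
  then show ?thesis
    unfolding F_def by blast
qed

end
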